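(* The set of those $A\in\mathcal X$ for which there exist linearly independent $v_1,\dots,v_n\in\mathbb Z^n$ with $\mathcal S_1(A)=\{\pm v_1,\dots,\pm v_n\}$ is dense in $\mathcal X$.
   Context: $S_n=\mathrm{SO}_n\backslash\mathrm{SL}_n\mathbb R$; a point is represented by $A\in\mathrm{SL}_n\mathbb R$ up to left multiplication by $\mathrm{SO}_n$, with its usual topology. $\mathrm{syst}_1(A)=\min_{v\in\mathbb Z^n\setminus\{0\}}|Av|$, $\mathcal S_1(A)=\{v\in\mathbb Z^n:|Av|=\mathrm{syst}_1(A)\}$. $A$ is well-rounded if $\mathcal S_1(A)$ spans $\mathbb R^n$; $\mathcal X\subset S_n$ is the set of well-rounded points. *)

theory Defs
  imports "HOL-Analysis.Analysis"
begin

definition Zn :: "(real^'n) set" where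
  "Zn = {v. \<forall>i. v $ i \<in> \<int>}"

definition SLn :: "(real^'n^'n) set" where
  "SLn = {A. det A = 1}"

definition SOn :: "(real^'n^'n) set" where
  "SOn = {Q. orthogonal_matrix Q \<and> det Q = 1}"

text \<open>The point of S_n = SO_n \ SL_n R represented by A: its orbit under left multiplication.\<close>
definition orbitSO :: "real^'n^'n \<Rightarrow> (real^'n^'n) set" where
  "orbitSO A = {Q ** A | Q. Q \<in> SOn}"

definition Sn :: "(real^'n^'n) set set" where
  "Sn = orbitSO ` SLn"

text \<open>Quotient topology on S_n induced by the orbit map from SL_n R (subspace topology).\<close>
definition Sn_top :: "(real^'n^'n) set topology" where
  "Sn_top = topology (\<lambda>U. U \<subseteq> Sn \<and>
      openin (top_of_set SLn) {A \<in> SLn. orbitSO A \<in> U})"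

definition syst1 :: "real^'n^'n \<Rightarrow> real" where
  "syst1 A = Inf {norm (A *v v) | v. v \<in> Zn \<and> v \<noteq> 0}"

definition S1 :: "real^'n^'n \<Rightarrow> (real^'n) set" where
  "S1 A = {v \<in> Zn. norm (A *v v) = syst1 A}"

definition well_rounded :: "real^'n^'n \<Rightarrow> bool" where
  "well_rounded A \<longleftrightarrow> span (S1 A) = UNIV"

text \<open>The set \<X> of well-rounded points of S_n (syst1, S1 are SO_n-invariant).\<close>
definition WR :: "(real^'n^'n) set set" where
  "WR = {orbitSO A | A. A \<in> SLn \<and> well_rounded A}"

end

theory Submission
  imports Defs
begin

(* Let A be well rounded with systole m.  The images A v of its minimal vectors form a
   finite, centrally symmetric configuration F with no parallel pairs other than x, -x.
   The combinatorial core shows that such an F contains a basis B of its span together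
   with a linear map S whose quadratic form x \<bullet> S x vanishes on B and is positive on
   F - (B \<union> -B); it is proved by induction on the dimension, adding at each step an
   extremal vector on the positive side of a hyperplane.  Moving each basis vector w
   along the circle of radius m towards S w gives a curve of matrices N h through the
   identity which keeps the basis at length m while, to first order, lengthening every
   other minimal vector, because the derivative of |N h x|^2 at 0 is 4 (x \<bullet> S x).
   Discreteness of the lattice gives a gap between the systole and the next length, so
   for small h no other lattice vector becomes minimal, and rescaling N h A to
   determinant one yields a nearby point of SL_n whose minimal vectors are exactly \<plusminus>B.
   Density in SL_n finally passes to the quotient topology of S_n. *)

section \<open>Quadratic forms adapted to a configuration of vectors\<close>

definition reduced_symmetric :: "'a::real_vector set \<Rightarrow> bool" where
  "reduced_symmetric F \<longleftrightarrow> finite F \<and> 0 \<notin> F \<and> (\<forall>x\<in>F. - x \<in> F) \<and>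
     (\<forall>x\<in>F. \<forall>t. t *\<^sub>R x \<in> F \<longrightarrow> t = 1 \<or> t = -1)"

definition adapted_form :: "'a::real_inner set \<Rightarrow> 'a set \<Rightarrow> ('a \<Rightarrow> 'a) \<Rightarrow> bool" where
  "adapted_form F B S \<longleftrightarrow> linear S \<and> (\<forall>w\<in>B. w \<bullet> S w = 0) \<and>
     (\<forall>x\<in>F. x \<notin> B \<longrightarrow> - x \<notin> B \<longrightarrow> 0 < x \<bullet> S x)"

(* Cutting a reduced symmetric configuration by a subspace keeps it reduced symmetric;
   this is what makes the induction on the dimension go through. *)
lemma reduced_symmetric_Int_span:
  assumes "reduced_symmetric F"
  shows "reduced_symmetric (F \<inter> span H)"
  using assms span_neg unfolding reduced_symmetric_def by auto

lemma inner_lt_of_norm_le: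
  fixes p q :: "'a::real_inner"
  assumes "norm p \<le> norm q" "p \<noteq> q"
  shows "q \<bullet> p < q \<bullet> q"
proof -
  have "0 < norm (p - q) ^ 2" using assms(2) by simp
  also have "\<dots> = p \<bullet> p - 2 * (q \<bullet> p) + q \<bullet> q"
    by (simp add: power2_norm_eq_inner inner_diff_left inner_diff_right inner_commute)
  finally have "0 < p \<bullet> p - 2 * (q \<bullet> p) + q \<bullet> q" .
  moreover have "p \<bullet> p \<le> q \<bullet> q"
    using assms(1) by (metis norm_ge_zero power2_norm_eq_inner power_mono)
  ultimately show ?thesis by linarith
qed

lemma finite_dominating_multiple:
  fixes f d :: "'a \<Rightarrow> real"
  assumes "finite G" and d: "\<And>x. x \<in> G \<Longrightarrow> 0 < d x"
  obtains K where "\<And>x. x \<in> G \<Longrightarrow> 0 < f x + K * d x"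
proof -
  define K where "K = 1 + (\<Sum>y\<in>G. \<bar>f y\<bar> / d y)"
  have "0 < f x + K * d x" if x: "x \<in> G" for x
  proof -
    have "\<bar>f x\<bar> / d x \<le> (\<Sum>y\<in>G. \<bar>f y\<bar> / d y)"
      using assms x by (intro member_le_sum) (auto intro: divide_nonneg_pos less_imp_le)
    then have "\<bar>f x\<bar> + d x \<le> K * d x"
      using d[OF x] by (simp add: K_def field_simps)
    then show ?thesis using d[OF x] by linarith
  qed
  then show thesis using that by blast
qed

(* Its left-hand side is the correction term that makes the new form positive on x. *)
lemma extreme_ray_gap:
  fixes F :: "'a::real_inner set"
  assumes F: "reduced_symmetric F" and xF: "x \<in> F" and eF: "e \<in> F" and "x \<noteq> e"
    and ux: "0 < u \<bullet> x" and ue: "0 < u \<bullet> e"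
    and le: "norm (x /\<^sub>R (u \<bullet> x)) \<le> norm (e /\<^sub>R (u \<bullet> e))"
  shows "0 < (u \<bullet> x) * ((e /\<^sub>R (u \<bullet> e)) \<bullet> (((u \<bullet> x) / (u \<bullet> e)) *\<^sub>R e - x))"
proof -
  define px pe where "px = x /\<^sub>R (u \<bullet> x)" and "pe = e /\<^sub>R (u \<bullet> e)"
  have "px \<noteq> pe"
  proof
    assume "px = pe"
    have "x = (u \<bullet> x) *\<^sub>R px" using ux by (simp add: px_def)
    also have "\<dots> = ((u \<bullet> x) / (u \<bullet> e)) *\<^sub>R e"
      using \<open>px = pe\<close> by (simp add: pe_def divide_inverse mult.commute)
    finally have xe: "((u \<bullet> x) / (u \<bullet> e)) *\<^sub>R e = x" by simp
    then have "(u \<bullet> x) / (u \<bullet> e) = 1 \<or> (u \<bullet> x) / (u \<bullet> e) = -1"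
      using F xF eF unfolding reduced_symmetric_def by metis
    moreover have "0 < (u \<bullet> x) / (u \<bullet> e)" using ux ue by simp
    ultimately show False using xe \<open>x \<noteq> e\<close> by auto
  qed
  then have "pe \<bullet> px < pe \<bullet> pe" using le by (intro inner_lt_of_norm_le) (simp_all add: px_def pe_def)
  moreover have "((u \<bullet> x) / (u \<bullet> e)) *\<^sub>R e - x = (u \<bullet> x) *\<^sub>R (pe - px)"
    using ux ue by (simp add: px_def pe_def scaleR_diff_right divide_inverse mult.commute)
  ultimately have "0 < (u \<bullet> x) * (pe \<bullet> (((u \<bullet> x) / (u \<bullet> e)) *\<^sub>R e - x))"
    using ux by (simp add: inner_diff_right)
  then show ?thesis unfolding pe_def .
qed

lemma extremal_vector_exists:
  assumes "finite F" and "\<exists>w\<in>F. 0 < u \<bullet> w"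
  shows "\<exists>e\<in>F. 0 < u \<bullet> e \<and>
    (\<forall>x\<in>F. 0 < u \<bullet> x \<longrightarrow> norm (x /\<^sub>R (u \<bullet> x)) \<le> norm (e /\<^sub>R (u \<bullet> e)))"
proof -
  define G where "G = {x \<in> F. 0 < u \<bullet> x}"
  have "finite G" "G \<noteq> {}" using assms by (auto simp: G_def)
  then obtain e where "is_arg_min (\<lambda>x. - norm (x /\<^sub>R (u \<bullet> x))) (\<lambda>x. x \<in> G) e"
    using ex_is_arg_min_if_finite by blast
  then show ?thesis by (auto simp: is_arg_min_linorder G_def)
qed

lemma hyperplane_split:
  fixes F :: "'a::euclidean_space set"
  assumes "dim F = Suc k"
  obtains H u where "H \<subseteq> F" "independent H" "card H = k"
    "\<And>z. z \<in> span H \<Longrightarrow> u \<bullet> z = 0"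
    "\<And>z. z \<in> span F \<Longrightarrow> u \<bullet> z = 0 \<Longrightarrow> z \<in> span H"
    "\<exists>w\<in>F. 0 < u \<bullet> w"
proof -
  obtain B where B: "B \<subseteq> F" "independent B" "F \<subseteq> span B"
    using maximal_independent_subset by blast
  have spB: "span B = span F"
    using B by (metis span_mono span_span subset_antisym span_minimal subspace_span)
  have cardB: "card B = Suc k"
    using dim_eq_card[OF spB B(2)] assms by argo
  then obtain w where w: "w \<in> B" by fastforce
  define H where "H = B - {w}"
  have indH: "independent H" using B(2) H_def by (metis Diff_subset independent_mono)
  have cardH: "card H = k" using cardB w finiteI_independent[OF B(2)] H_def by simp
  have wH: "w \<notin> span H" using B(2) w unfolding H_def by (meson dependent_def)
  obtain y u where yu: "y \<in> span H" "\<And>z. z \<in> span H \<Longrightarrow> orthogonal u z" "w = y + u"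
    using orthogonal_subspace_decomp_exists by metis
  have uH: "u \<bullet> z = 0" if "z \<in> span H" for z using yu(2)[OF that] by (simp add: orthogonal_def)
  have uw: "u \<bullet> w = u \<bullet> u" using yu uH by (simp add: inner_add_right)
  have "u \<noteq> 0" using yu wH by auto
  then have uw_pos: "0 < u \<bullet> w" using uw by simp
  have KF: "z \<in> span H" if "z \<in> span F" "u \<bullet> z = 0" for z
  proof -
    have "z \<in> span (insert w H)" using that spB w H_def by (simp add: insert_absorb)
    then obtain t where t: "z - t *\<^sub>R w \<in> span H" using span_breakdown_eq by blast
    then have "t * (u \<bullet> u) = 0" using uH[OF t] that(2) uw by (simp add: inner_diff_right)
    then show ?thesis using t \<open>u \<noteq> 0\<close> by simp
  qed
  show thesis
  proof (rule that[OF _ indH cardH uH KF])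
    show "H \<subseteq> F" using B(1) H_def by auto
    show "\<exists>w\<in>F. 0 < u \<bullet> w" using B(1) w uw_pos by auto
  qed
qed

lemma basis_extension:
  assumes B': "independent B'" "span B' = span H"
    and uH: "\<And>z. z \<in> span H \<Longrightarrow> u \<bullet> z = 0"
    and KF: "\<And>z. z \<in> span F \<Longrightarrow> u \<bullet> z = 0 \<Longrightarrow> z \<in> span H"
    and BF: "B' \<subseteq> F" and eF: "e \<in> F" and ue: "0 < u \<bullet> e"
  shows "independent (insert e B')" "span (insert e B') = span F"
proof -
  have "e \<notin> span B'" using uH ue B'(2) by fastforce
  then show "independent (insert e B')" using B'(1) by (simp add: independent_insertI)
  have "F \<subseteq> span (insert e B')"
  proof
    fix x assume xF: "x \<in> F"
    define c where "c = (u \<bullet> x) / (u \<bullet> e)"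
    have "x - c *\<^sub>R e \<in> span F" using xF eF by (intro span_diff span_scale span_base)
    moreover have "u \<bullet> (x - c *\<^sub>R e) = 0" using ue by (simp add: c_def inner_diff_right)
    ultimately have "x - c *\<^sub>R e \<in> span B'" using KF B'(2) by blast
    then have "x - c *\<^sub>R e \<in> span (insert e B')" by (meson span_mono subset_insertI subsetD)
    then have "(x - c *\<^sub>R e) + c *\<^sub>R e \<in> span (insert e B')"
      by (rule span_add[OF _ span_scale[OF span_base]]) auto
    then show "x \<in> span (insert e B')" by simp
  qed
  then have "span F \<subseteq> span (insert e B')" by (simp add: span_minimal)
  moreover have "span (insert e B') \<subseteq> span F" using BF eF by (intro span_mono) auto
  ultimately show "span (insert e B') = span F" by (rule subset_antisym[rotated])
qed

lemma pullback_plus_rank_one: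
  fixes P S' :: "'a::euclidean_space \<Rightarrow> 'a" and L :: "'a \<Rightarrow> real" and u :: 'a
  assumes P: "linear P" and "linear S'" and "linear L"
  defines "S \<equiv> \<lambda>x. adjoint P (S' (P x)) + L x *\<^sub>R u"
  shows "linear S" and "x \<bullet> S x = P x \<bullet> S' (P x) + (u \<bullet> x) * L x"
proof -
  show "linear S" unfolding S_def using assms
    by (intro linear_compose_add linear_compose[OF linear_compose[OF P \<open>linear S'\<close>] adjoint_linear[OF P], unfolded o_def]
        linear_compose[OF \<open>linear L\<close> linear_scaleR_left[of u], unfolded o_def])
  show "x \<bullet> S x = P x \<bullet> S' (P x) + (u \<bullet> x) * L x"
    by (simp add: S_def inner_add_right adjoint_works[OF P] inner_commute)
qed

(* Gluing criterion: a linear S is adapted to (F, insert e B') if it agrees with the form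
   of S' on the hyperplane u \<bullet> x = 0, vanishes at e and is positive on the rest of the
   positive side; the negative side follows by symmetry. *)
lemma adapted_form_glue:
  fixes F :: "'a::euclidean_space set"
  assumes F: "reduced_symmetric F"
    and uH: "\<And>z. z \<in> span H \<Longrightarrow> u \<bullet> z = 0"
    and KF: "\<And>z. z \<in> span F \<Longrightarrow> u \<bullet> z = 0 \<Longrightarrow> z \<in> span H"
    and B'H: "B' \<subseteq> span H" and S': "adapted_form (F \<inter> span H) B' S'"
    and S: "linear S" and on_hyperplane: "\<And>x. u \<bullet> x = 0 \<Longrightarrow> x \<bullet> S x = x \<bullet> S' x"
    and at_e: "e \<bullet> S e = 0"
    and positive_side: "\<And>x. x \<in> F \<Longrightarrow> 0 < u \<bullet> x \<Longrightarrow> x \<noteq> e \<Longrightarrow> 0 < x \<bullet> S x"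
  shows "adapted_form F (insert e B') S"
  unfolding adapted_form_def
proof (intro conjI S ballI impI)
  fix w assume "w \<in> insert e B'"
  then show "w \<bullet> S w = 0"
  proof
    assume w: "w \<in> B'"
    then have "u \<bullet> w = 0" using B'H uH by blast
    then show ?thesis using S' w by (simp add: on_hyperplane adapted_form_def)
  qed (simp add: at_e)
next
  fix x assume xF: "x \<in> F" and xB: "x \<notin> insert e B'" and mxB: "- x \<notin> insert e B'"
  consider "u \<bullet> x = 0" | "0 < u \<bullet> x" | "u \<bullet> x < 0" by linarith
  then show "0 < x \<bullet> S x"
  proof cases
    case 1
    then have "x \<in> F \<inter> span H" using KF xF by (auto intro: span_base)
    then show ?thesis using S' xB mxB 1 by (simp add: on_hyperplane adapted_form_def)
  next
    case 2
    then show ?thesis using positive_side xF xB by simp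
  next
    case 3
    then have "0 < (- x) \<bullet> S (- x)"
      using F xF mxB by (intro positive_side) (auto simp: reduced_symmetric_def)
    then show ?thesis by (simp add: linear_neg[OF S])
  qed
qed

(* The new form is S'
   pulled back along the projection P along e, plus a large multiple of a rank-one term
   vanishing on the hyperplane and at e and positive elsewhere on the positive side. *)
lemma form_extension:
  fixes F :: "'a::euclidean_space set"
  assumes F: "reduced_symmetric F"
    and uH: "\<And>z. z \<in> span H \<Longrightarrow> u \<bullet> z = 0"
    and KF: "\<And>z. z \<in> span F \<Longrightarrow> u \<bullet> z = 0 \<Longrightarrow> z \<in> span H"
    and eF: "e \<in> F" and ue: "0 < u \<bullet> e"
    and emax: "\<And>x. x \<in> F \<Longrightarrow> 0 < u \<bullet> x \<Longrightarrow> norm (x /\<^sub>R (u \<bullet> x)) \<le> norm (e /\<^sub>R (u \<bullet> e))"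
    and B'H: "B' \<subseteq> span H" and S': "adapted_form (F \<inter> span H) B' S'"
  shows "\<exists>S. adapted_form F (insert e B') S"
proof -
  define P where "P x = x - ((u \<bullet> x) / (u \<bullet> e)) *\<^sub>R e" for x
  define L where "L x = (e /\<^sub>R (u \<bullet> e)) \<bullet> (((u \<bullet> x) / (u \<bullet> e)) *\<^sub>R e - x)" for x
  have linP: "linear P"
    by (rule linearI) (simp_all add: P_def inner_add_right add_divide_distrib scaleR_add_left algebra_simps)
  have linL: "linear L"
    by (rule linearI) (simp_all add: L_def inner_add_right inner_diff_right add_divide_distrib algebra_simps)
  have linS': "linear S'" using S' by (simp add: adapted_form_def)
  define G where "G = {x \<in> F. 0 < u \<bullet> x} - {e}"
  have finG: "finite G" using F by (simp add: G_def reduced_symmetric_def)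
  have Lpos: "0 < (u \<bullet> x) * L x" if "x \<in> G" for x
    using that F eF ue emax unfolding G_def L_def by (intro extreme_ray_gap) auto
  obtain K where K: "\<And>x. x \<in> G \<Longrightarrow> 0 < P x \<bullet> S' (P x) + K * ((u \<bullet> x) * L x)"
    using finite_dominating_multiple[where d = "\<lambda>x. (u \<bullet> x) * L x" and f = "\<lambda>x. P x \<bullet> S' (P x)"]
      finG Lpos by blast
  define S where "S x = adjoint P (S' (P x)) + (K * L x) *\<^sub>R u" for x
  have linKL: "linear (\<lambda>x. K * L x)"
    by (rule linearI) (simp_all add: linear_add[OF linL] linear_scale[OF linL] algebra_simps)
  have linS: "linear S" and TS: "\<And>x. x \<bullet> S x = P x \<bullet> S' (P x) + (u \<bullet> x) * (K * L x)"
    using pullback_plus_rank_one[OF linP linS' linKL, where u = u] by (simp_all add: S_def[abs_def])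
  have "adapted_form F (insert e B') S"
  proof (rule adapted_form_glue[OF F uH KF B'H S' linS])
    show "x \<bullet> S x = x \<bullet> S' x" if "u \<bullet> x = 0" for x using that by (simp add: TS P_def)
    show "e \<bullet> S e = 0" using ue by (simp add: TS P_def L_def linear_0[OF linS'])
    show "0 < x \<bullet> S x" if "x \<in> F" "0 < u \<bullet> x" "x \<noteq> e" for x
      using K[of x] that by (simp add: TS G_def algebra_simps)
  qed
  then show ?thesis by blast
qed

lemma adapted_basis_exists:
  fixes F :: "'a::euclidean_space set"
  assumes "reduced_symmetric F"
  shows "\<exists>B S. B \<subseteq> F \<and> independent B \<and> span B = span F \<and> adapted_form F B S"
proof -
  have "\<exists>B S. B \<subseteq> F \<and> independent B \<and> span B = span F \<and> adapted_form F B S"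
    if "reduced_symmetric F" "dim F = k" for F :: "'a set" and k
    using that
  proof (induction k arbitrary: F)
    case 0
    then have "F = {}" using dim_eq_0 unfolding reduced_symmetric_def by blast
    then show ?case by (auto simp: adapted_form_def independent_empty linear_zero intro!: exI[of _ "\<lambda>x. 0"])
  next
    case (Suc k)
    obtain H u where H: "H \<subseteq> F" "independent H" "card H = k"
      and uH: "\<And>z. z \<in> span H \<Longrightarrow> u \<bullet> z = 0"
      and KF: "\<And>z. z \<in> span F \<Longrightarrow> u \<bullet> z = 0 \<Longrightarrow> z \<in> span H"
      and pos: "\<exists>w\<in>F. 0 < u \<bullet> w"
      using hyperplane_split[OF Suc.prems(2)] by metis
    have spF': "span (F \<inter> span H) = span H"
      using H(1) by (intro subset_antisym span_minimal span_mono) (auto intro: span_base)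
    then have "dim (F \<inter> span H) = k"
      using dim_eq_card[OF spF'[symmetric] H(2)] H(3) by simp
    then obtain B' S' where B': "B' \<subseteq> F \<inter> span H" "independent B'" "span B' = span H"
      and S': "adapted_form (F \<inter> span H) B' S'"
      using Suc.IH[OF reduced_symmetric_Int_span[OF Suc.prems(1)]] spF' by metis
    obtain e where eF: "e \<in> F" and ue: "0 < u \<bullet> e"
      and emax: "\<forall>x\<in>F. 0 < u \<bullet> x \<longrightarrow> norm (x /\<^sub>R (u \<bullet> x)) \<le> norm (e /\<^sub>R (u \<bullet> e))"
      using extremal_vector_exists[OF _ pos] Suc.prems(1) unfolding reduced_symmetric_def by blast
    have "B' \<subseteq> span H" using B'(1) by blast
    then obtain S where S: "adapted_form F (insert e B') S"
      using form_extension[OF Suc.prems(1) uH KF eF ue emax[rule_format] _ S'] by blast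
    have B'F: "B' \<subseteq> F" using B'(1) by blast
    show ?case
    proof (intro exI conjI)
      show "insert e B' \<subseteq> F" using B'F eF by blast
      show "independent (insert e B')"
        by (rule basis_extension(1)[OF B'(2,3) uH KF B'F eF ue])
      show "span (insert e B') = span F"
        by (rule basis_extension(2)[OF B'(2,3) uH KF B'F eF ue])
    qed (fact S)
  qed
  from this[OF assms refl] show ?thesis .
qed

section \<open>Moving a vector along a circle\<close>

(* The rational parametrisation of the circle of radius |w| in the plane of w and z:
   it starts at w with velocity 2z and, for z orthogonal to w, never leaves the sphere. *)
definition sphere_arc :: "'a::real_inner \<Rightarrow> 'a \<Rightarrow> real \<Rightarrow> 'a" where
  "sphere_arc w z h = (let t = h\<^sup>2 * (norm z / norm w)\<^sup>2
     in ((1 - t) / (1 + t)) *\<^sub>R w + (2 * h / (1 + t)) *\<^sub>R z)"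

lemma sphere_arc_0 [simp]: "sphere_arc w z 0 = w"
  by (simp add: sphere_arc_def)

lemma norm_sphere_arc:
  fixes w z :: "'a::real_inner"
  assumes wz: "w \<bullet> z = 0" and "w \<noteq> 0"
  shows "norm (sphere_arc w z h) = norm w"
proof -
  define t where "t = h\<^sup>2 * (norm z / norm w)\<^sup>2"
  have t0: "0 \<le> t" by (simp add: t_def)
  have zz: "(2 * h)\<^sup>2 * (z \<bullet> z) = 4 * t * (w \<bullet> w)"
    using \<open>w \<noteq> 0\<close> by (simp add: t_def power_divide power2_norm_eq_inner[symmetric] field_simps)
  have arc: "sphere_arc w z h = ((1 - t) / (1 + t)) *\<^sub>R w + (2 * h / (1 + t)) *\<^sub>R z"
    by (simp add: sphere_arc_def Let_def t_def)
  have "sphere_arc w z h \<bullet> sphere_arc w z h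
      = (((1 - t) / (1 + t))\<^sup>2 * (w \<bullet> w) + ((2 * h / (1 + t)))\<^sup>2 * (z \<bullet> z))"
    unfolding arc by (simp add: inner_add_left inner_add_right wz inner_commute[of z w] power2_eq_square mult.assoc)
  also have "\<dots> = ((1 - t)\<^sup>2 * (w \<bullet> w) + (2 * h)\<^sup>2 * (z \<bullet> z)) / (1 + t)\<^sup>2"
    by (simp add: power_divide add_divide_distrib power2_eq_square mult.assoc)
  also have "(1 - t)\<^sup>2 * (w \<bullet> w) + (2 * h)\<^sup>2 * (z \<bullet> z) = (1 + t)\<^sup>2 * (w \<bullet> w)"
    unfolding zz by (simp add: power2_eq_square algebra_simps)
  also have "(1 + t)\<^sup>2 * (w \<bullet> w) / (1 + t)\<^sup>2 = w \<bullet> w"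
    using t0 by simp
  finally show ?thesis by (simp add: norm_eq_sqrt_inner)
qed

lemma sphere_arc_derivative:
  "(sphere_arc w z has_vector_derivative 2 *\<^sub>R z) (at 0)"
proof -
  define a where "a = (norm z / norm w)\<^sup>2"
  have a0: "0 \<le> a" by (simp add: a_def)
  have p: "((\<lambda>h. (1 - h\<^sup>2 * a) / (1 + h\<^sup>2 * a)) has_real_derivative 0) (at 0)"
    using a0 by (auto intro!: derivative_eq_intros simp: add_nonneg_eq_0_iff)
  have q: "((\<lambda>h. 2 * h / (1 + h\<^sup>2 * a)) has_real_derivative 2) (at 0)"
    using a0 by (auto intro!: derivative_eq_intros simp: add_nonneg_eq_0_iff)
  have "((\<lambda>h. ((1 - h\<^sup>2 * a) / (1 + h\<^sup>2 * a)) *\<^sub>R w + (2 * h / (1 + h\<^sup>2 * a)) *\<^sub>R z)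
      has_vector_derivative 2 *\<^sub>R z) (at 0)"
    using has_vector_derivative_add[OF has_vector_derivative_scaleR[OF p has_vector_derivative_const]
        has_vector_derivative_scaleR[OF q has_vector_derivative_const]] by simp
  moreover have "sphere_arc w z = (\<lambda>h. ((1 - h\<^sup>2 * a) / (1 + h\<^sup>2 * a)) *\<^sub>R w + (2 * h / (1 + h\<^sup>2 * a)) *\<^sub>R z)"
    by (simp add: fun_eq_iff sphere_arc_def Let_def a_def)
  ultimately show ?thesis by (simp only:)
qed

lemma norm_increases_right:
  fixes y :: "real \<Rightarrow> 'a::real_inner"
  assumes y: "(y has_vector_derivative y') (at 0)" and pos: "0 < y 0 \<bullet> y'"
  shows "\<forall>\<^sub>F h in at_right 0. norm (y 0) < norm (y h)"
proof -
  have "((\<lambda>h. y h \<bullet> y h) has_vector_derivative (y 0 \<bullet> y' + y' \<bullet> y 0)) (at 0)"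
    by (rule bounded_bilinear.has_vector_derivative[OF bounded_bilinear_inner y y])
  then have "((\<lambda>h. y h \<bullet> y h) has_real_derivative 2 * (y 0 \<bullet> y')) (at 0)"
    by (simp add: has_real_derivative_iff_has_vector_derivative inner_commute)
  moreover have "0 < 2 * (y 0 \<bullet> y')" using pos by simp
  ultimately obtain d where d: "0 < d" "\<forall>h>0. h < d \<longrightarrow> y 0 \<bullet> y 0 < y (0 + h) \<bullet> y (0 + h)"
    by (blast dest: DERIV_pos_inc_right)
  show ?thesis unfolding eventually_at_right_field
  proof (intro exI conjI allI impI)
    fix h :: real assume "0 < h" "h < d"
    then have "(norm (y 0))^2 < (norm (y h))^2" using d(2) by (simp add: power2_norm_eq_inner)
    then show "norm (y 0) < norm (y h)" by (simp add: power_less_imp_less_base)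
  qed (fact d(1))
qed

section \<open>Systole and minimal vectors of a lattice\<close>

lemma Zn_uminus: "v \<in> Zn \<Longrightarrow> - v \<in> Zn"
  by (simp add: Zn_def)

lemma finite_Zn_ball: "finite {v \<in> (Zn :: (real^'n) set). norm v \<le> R}"
proof -
  define I where "I = (of_int :: int \<Rightarrow> real) ` {-\<lceil>R\<rceil>..\<lceil>R\<rceil>}"
  have "{v \<in> (Zn :: (real^'n) set). norm v \<le> R} \<subseteq> vec_lambda ` (PiE UNIV (\<lambda>_. I))"
  proof
    fix v :: "real^'n" assume v: "v \<in> {v \<in> Zn. norm v \<le> R}"
    have "v $ i \<in> I" for i
    proof -
      obtain k where k: "v $ i = of_int k" using v unfolding Zn_def by (auto elim: Ints_cases)
      have "\<bar>v $ i\<bar> \<le> R" using v component_le_norm_cart[of v i] by auto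
      then have "\<bar>k\<bar> \<le> \<lceil>R\<rceil>" using k le_of_int_ceiling[of R] by linarith
      then show ?thesis unfolding I_def k by (intro imageI) auto
    qed
    then have "vec_nth v \<in> PiE UNIV (\<lambda>_. I)" by (simp add: PiE_iff)
    then show "v \<in> vec_lambda ` (PiE UNIV (\<lambda>_. I))"
      using image_eqI[of v vec_lambda "vec_nth v"] by simp
  qed
  moreover have "finite (vec_lambda ` (PiE UNIV (\<lambda>_. I)) :: (real^'n) set)"
    unfolding I_def by (intro finite_imageI finite_PiE) auto
  ultimately show ?thesis by (rule finite_subset)
qed

lemma invertible_inj_mult:
  fixes A :: "real^'n^'n"
  assumes "invertible A"
  shows "inj ((*v) A)"
proof -
  obtain B where "B ** A = mat 1" using assms invertible_def by blast
  then have "B *v (A *v x) = x" for x by (simp add: matrix_vector_mul_assoc)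
  then show ?thesis by (rule inj_on_inverseI)
qed

lemma finite_short_vectors:
  fixes A :: "real^'n^'n"
  assumes "invertible A"
  shows "finite {v \<in> Zn. norm (A *v v) \<le> R}"
proof -
  obtain c where c: "0 < c" "\<And>x. c * norm x \<le> norm (A *v x)"
    using linear_inj_bounded_below_pos[OF matrix_vector_mul_linear invertible_inj_mult[OF assms]] by blast
  have "{v \<in> Zn. norm (A *v v) \<le> R} \<subseteq> {v \<in> Zn. norm v \<le> R / c}"
    using c by (auto simp: pos_le_divide_eq mult.commute intro: order_trans)
  then show ?thesis using finite_Zn_ball finite_subset by blast
qed

lemma syst1_le: "v \<in> Zn \<Longrightarrow> v \<noteq> 0 \<Longrightarrow> syst1 A \<le> norm (A *v v)"
  unfolding syst1_def by (rule cInf_lower) (auto intro: bdd_belowI[of _ 0])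

lemma syst1_S1_eqI:
  fixes A :: "real^'n^'n"
  assumes R: "R \<subseteq> Zn" "0 \<notin> R" "R \<noteq> {}" and "0 < \<mu>"
    and on_R: "\<And>v. v \<in> R \<Longrightarrow> norm (A *v v) = \<mu>"
    and off_R: "\<And>v. v \<in> Zn \<Longrightarrow> v \<noteq> 0 \<Longrightarrow> v \<notin> R \<Longrightarrow> \<mu> < norm (A *v v)"
  shows "syst1 A = \<mu>" and "S1 A = R"
proof -
  have attained: "norm (A *v v) = \<mu> \<longleftrightarrow> v \<in> R" if "v \<in> Zn" for v
    using on_R off_R[OF that] \<open>0 < \<mu>\<close> by (cases "v = 0") (auto simp: R(2))
  obtain v0 where "v0 \<in> R" using R(3) by blast
  then have "v0 \<in> Zn" "v0 \<noteq> 0" "norm (A *v v0) = \<mu>" using R on_R by auto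
  then have "\<mu> \<in> {norm (A *v v) |v. v \<in> Zn \<and> v \<noteq> 0}" by blast
  moreover have "\<mu> \<le> r" if r: "r \<in> {norm (A *v v) |v. v \<in> Zn \<and> v \<noteq> 0}" for r
  proof -
    obtain v where "r = norm (A *v v)" "v \<in> Zn" "v \<noteq> 0" using r by blast
    then show ?thesis using on_R[of v] off_R[of v] by (cases "v \<in> R") auto
  qed
  ultimately show syst: "syst1 A = \<mu>" unfolding syst1_def by (rule cInf_eq_minimum)
  show "S1 A = R" unfolding S1_def syst using attained R(1) by blast
qed

lemma S1_uminus: "v \<in> S1 A \<Longrightarrow> - v \<in> S1 A"
  unfolding S1_def using linear_neg[OF matrix_vector_mul_linear, of A v] by (simp add: Zn_uminus)

lemma well_rounded_minimal_vectors:
  fixes A :: "real^'n^'n"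
  assumes inv: "invertible A" and wr: "well_rounded A"
  shows "0 < syst1 A" and "finite (S1 A)" and "reduced_symmetric ((*v) A ` S1 A)"
proof -
  have injA: "inj ((*v) A)" using inv by (rule invertible_inj_mult)
  have "\<not> S1 A \<subseteq> {0}"
  proof
    assume "S1 A \<subseteq> {0}"
    then have "span (S1 A) \<subseteq> {0}" using span_mono[of "S1 A" "{0}"] by simp
    moreover have "axis undefined (1::real) \<noteq> (0 :: real^'n)"
      by (metis axis_nth zero_index zero_neq_one)
    ultimately show False using wr unfolding well_rounded_def by blast
  qed
  then obtain v0 where v0: "v0 \<in> S1 A" "v0 \<noteq> 0" by blast
  then have "A *v v0 \<noteq> 0" using injA by (metis injD matrix_vector_mult_0_right)
  moreover have "norm (A *v v0) = syst1 A" using v0 by (simp add: S1_def)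
  ultimately show m: "0 < syst1 A" by (metis zero_less_norm_iff)
  show fin: "finite (S1 A)"
    using finite_short_vectors[OF inv, of "syst1 A"] by (rule finite_subset[rotated]) (auto simp: S1_def)
  have "t = 1 \<or> t = -1" if "x \<in> (*v) A ` S1 A" "t *\<^sub>R x \<in> (*v) A ` S1 A" for x t
  proof -
    have "norm x = syst1 A" "norm (t *\<^sub>R x) = syst1 A" using that by (auto simp: S1_def simp del: norm_scaleR)
    then have "\<bar>t\<bar> = 1" using m by simp
    then show ?thesis by linarith
  qed
  moreover have "- x \<in> (*v) A ` S1 A" if x: "x \<in> (*v) A ` S1 A" for x
  proof -
    obtain v where "v \<in> S1 A" "x = A *v v" using x by blast
    then show ?thesis
      using S1_uminus linear_neg[OF matrix_vector_mul_linear, of A v] by (metis image_eqI)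
  qed
  moreover have "0 \<notin> (*v) A ` S1 A" using m by (auto simp: S1_def)
  ultimately show "reduced_symmetric ((*v) A ` S1 A)"
    using fin unfolding reduced_symmetric_def by blast
qed

lemma systole_gap:
  fixes A :: "real^'n^'n"
  assumes "invertible A"
  shows "\<exists>g>0. \<forall>v\<in>Zn. v \<noteq> 0 \<longrightarrow> v \<notin> S1 A \<longrightarrow> syst1 A + g \<le> norm (A *v v)"
proof -
  define m where "m = syst1 A"
  define T where "T = insert (m + 1)
    ((\<lambda>v. norm (A *v v)) ` {v \<in> Zn. norm (A *v v) \<le> m + 1 \<and> m < norm (A *v v)})"
  have finT: "finite T" unfolding T_def
    by (intro finite_insert[THEN iffD2] finite_imageI finite_subset[OF _ finite_short_vectors[OF assms, of "m + 1"]]) auto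
  have "Min T \<in> T" using finT by (intro Min_in) (auto simp: T_def)
  then have gpos: "0 < Min T - m" by (auto simp: T_def)
  show ?thesis
  proof (intro exI[of _ "Min T - m"] conjI gpos ballI impI)
    fix v assume "v \<in> Zn" "v \<noteq> 0" "v \<notin> S1 A"
    note that = this
    have "m \<le> norm (A *v v)" using syst1_le[OF that(1,2)] by (simp add: m_def)
    moreover have "norm (A *v v) \<noteq> m" using that(1,3) by (simp add: S1_def m_def)
    ultimately have gt: "m < norm (A *v v)" by simp
    have "Min T \<le> norm (A *v v)"
    proof (cases "norm (A *v v) \<le> m + 1")
      case True
      then have "norm (A *v v) \<in> T" using gt that(1) by (simp add: T_def)
      then show ?thesis using finT by (rule Min_le[rotated])
    next
      case False
      have "Min T \<le> m + 1" using finT by (rule Min_le) (simp add: T_def)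
      then show ?thesis using False by simp
    qed
    then show "syst1 A + (Min T - m) \<le> norm (A *v v)" by (simp add: m_def)
  qed
qed

section \<open>Deforming a basis by a curve of matrices\<close>

definition columns_matrix :: "('k::finite \<Rightarrow> real^'m) \<Rightarrow> real^'k^'m" where
  "columns_matrix f = (\<chi> i l. f l $ i)"

lemma columns_matrix_mult: "columns_matrix f *v c = (\<Sum>l\<in>UNIV. c $ l *\<^sub>R f l)"
  by (simp add: columns_matrix_def vec_eq_iff matrix_vector_mult_def sum_component mult.commute)

lemma columns_matrix_axis: "columns_matrix f *v axis j 1 = f j"
proof -
  have "(\<Sum>l\<in>UNIV. axis j 1 $ l *\<^sub>R f l) = (\<Sum>l\<in>UNIV. if l = j then f l else 0)"
    by (intro sum.cong) (auto simp: axis_def)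
  then show ?thesis by (simp add: columns_matrix_mult)
qed

lemma invertible_columns_matrix:
  fixes w :: "'n \<Rightarrow> real^'n"
  assumes injw: "inj w" and indw: "independent (range w)"
  shows "invertible (columns_matrix w)"
proof -
  have "c i = 0" if c: "(\<Sum>i\<in>UNIV. c i *s column i (columns_matrix w)) = 0" for c :: "'n \<Rightarrow> real" and i
  proof -
    have "(\<Sum>v\<in>range w. c (inv w v) *\<^sub>R v) = (\<Sum>i\<in>UNIV. c i *\<^sub>R w i)"
      using injw by (simp add: sum.reindex)
    also have "\<dots> = 0"
      using c by (simp add: columns_matrix_def column_def scalar_mult_eq_scaleR)
    finally have "\<forall>v\<in>range w. c (inv w v) = 0"
      using indw dependent_finite[of "range w"] by auto
    then show "c i = 0" using injw by auto
  qed
  then show ?thesis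
    using matrix_left_invertible_independent_columns invertible_left_inverse by blast
qed

lemma matvec_bound:
  fixes X :: "real^'n^'m"
  shows "norm (X *v y) \<le> (\<Sum>i\<in>UNIV. \<Sum>j\<in>UNIV. \<bar>X$i$j\<bar>) * norm y"
proof -
  have "norm (X *v y) \<le> (\<Sum>i\<in>UNIV. \<bar>(X *v y)$i\<bar>)" by (rule norm_le_l1_cart)
  also have "\<dots> \<le> (\<Sum>i\<in>UNIV. \<Sum>j\<in>UNIV. \<bar>X$i$j\<bar> * norm y)"
  proof (rule sum_mono)
    fix i
    have "\<bar>(X *v y)$i\<bar> \<le> (\<Sum>j\<in>UNIV. \<bar>X$i$j * y$j\<bar>)"
      unfolding matrix_vector_mult_def by (simp add: sum_abs)
    also have "\<dots> \<le> (\<Sum>j\<in>UNIV. \<bar>X$i$j\<bar> * norm y)"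
      by (intro sum_mono) (simp add: abs_mult mult_left_mono component_le_norm_cart)
    finally show "\<bar>(X *v y)$i\<bar> \<le> (\<Sum>j\<in>UNIV. \<bar>X$i$j\<bar> * norm y)" .
  qed
  also have "\<dots> = (\<Sum>i\<in>UNIV. \<Sum>j\<in>UNIV. \<bar>X$i$j\<bar>) * norm y"
    by (simp add: sum_distrib_right)
  finally show ?thesis .
qed

lemma tendsto_det:
  fixes f :: "'a \<Rightarrow> real^'n^'n"
  assumes "(f \<longlongrightarrow> X) F"
  shows "((\<lambda>x. det (f x)) \<longlongrightarrow> det X) F"
  unfolding det_def by (intro tendsto_intros tendsto_vec_nth assms)

lemma tendsto_matmul_right:
  fixes f :: "'a \<Rightarrow> real^'n^'m" and Y :: "real^'k^'n"
  assumes "(f \<longlongrightarrow> X) F"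
  shows "((\<lambda>x. f x ** Y) \<longlongrightarrow> X ** Y) F"
proof (intro vec_tendstoI)
  fix i j
  show "((\<lambda>x. (f x ** Y) $ i $ j) \<longlongrightarrow> (X ** Y) $ i $ j) F"
    unfolding matrix_matrix_mult_def by (simp, intro tendsto_intros tendsto_vec_nth assms)
qed

lemma tendsto_matrix_columns:
  fixes N :: "'a \<Rightarrow> real^'n^'m"
  assumes "\<And>x. ((\<lambda>h. N h *v x) \<longlongrightarrow> M *v x) F"
  shows "(N \<longlongrightarrow> M) F"
proof (intro vec_tendstoI)
  fix i j
  have "((\<lambda>h. (N h *v axis j 1) $ i) \<longlongrightarrow> (M *v axis j 1) $ i) F"
    by (intro tendsto_vec_nth assms)
  then show "((\<lambda>h. N h $ i $ j) \<longlongrightarrow> M $ i $ j) F"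
    by (simp add: matrix_vector_mult_def axis_def if_distrib sum.If_cases)
qed

lemma det_scaleR_mat: "det (c *\<^sub>R (X :: real^'n^'n)) = c ^ CARD('n) * det X"
proof -
  have "c *\<^sub>R X = (\<chi> i. c *s X$i)"
    by (simp add: vec_eq_iff scalar_mult_eq_scaleR)
  then show ?thesis using det_rows_mul[of "\<lambda>_. c" "\<lambda>i. X$i"] by simp
qed

lemma rotation_family:
  fixes w :: "'n \<Rightarrow> real^'n" and S :: "real^'n \<Rightarrow> real^'n"
  assumes W: "invertible (columns_matrix w)" and S: "linear S"
  obtains N :: "real \<Rightarrow> real^'n^'n" where
    "\<And>h l. N h *v w l = sphere_arc (w l) (S (w l)) h"
    "\<And>x. ((\<lambda>h. N h *v x) has_vector_derivative 2 *\<^sub>R S x) (at 0)"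
    "N 0 = mat 1" "(N \<longlongrightarrow> mat 1) (at 0)"
proof -
  obtain C where CW: "C ** columns_matrix w = mat 1" and WC: "columns_matrix w ** C = mat 1"
    using W invertible_def by blast
  define u where "u h l = sphere_arc (w l) (S (w l)) h" for h l
  define N where "N h = columns_matrix (u h) ** C" for h
  have Nx: "N h *v x = (\<Sum>l\<in>UNIV. (C *v x) $ l *\<^sub>R u h l)" for h x
    by (simp add: N_def columns_matrix_mult matrix_vector_mul_assoc[symmetric])
  have xdec: "x = (\<Sum>l\<in>UNIV. (C *v x) $ l *\<^sub>R w l)" for x
    using WC by (simp add: matrix_vector_mul_assoc columns_matrix_mult[symmetric])
  have "C *v w l = axis l 1" for l
    using CW by (simp add: columns_matrix_axis[symmetric] matrix_vector_mul_assoc)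
  then have Nw: "N h *v w l = u h l" for h l
    by (simp add: N_def matrix_vector_mul_assoc[symmetric] columns_matrix_axis)
  have deriv: "((\<lambda>h. N h *v x) has_vector_derivative 2 *\<^sub>R S x) (at 0)" for x
  proof -
    have "((\<lambda>h. \<Sum>l\<in>UNIV. (C *v x) $ l *\<^sub>R u h l)
        has_vector_derivative (\<Sum>l\<in>UNIV. (C *v x) $ l *\<^sub>R (2 *\<^sub>R S (w l)))) (at 0)"
      unfolding u_def
      by (intro has_vector_derivative_sum bounded_linear.has_vector_derivative[OF bounded_linear_scaleR_right]
          sphere_arc_derivative)
    moreover have "S x = (\<Sum>l\<in>UNIV. (C *v x) $ l *\<^sub>R S (w l))"
      by (subst (1) xdec) (simp add: linear_sum[OF S] linear_scale[OF S])
    then have "(\<Sum>l\<in>UNIV. (C *v x) $ l *\<^sub>R (2 *\<^sub>R S (w l))) = 2 *\<^sub>R S x"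
      by (simp add: scaleR_sum_right mult.commute)
    ultimately show ?thesis by (simp add: Nx)
  qed
  have "u 0 = w" by (simp add: u_def fun_eq_iff)
  then have N0: "N 0 = mat 1" by (simp add: N_def WC)
  have "((\<lambda>h. N h *v x) \<longlongrightarrow> N 0 *v x) (at 0)" for x
    using has_vector_derivative_continuous[OF deriv[of x]] by (simp add: continuous_at)
  then have "(N \<longlongrightarrow> mat 1) (at 0)" using N0 by (intro tendsto_matrix_columns) simp
  then show thesis using that Nw deriv N0 unfolding u_def by blast
qed

lemma deformation_lengthens:
  fixes N :: "real \<Rightarrow> real^'n^'n"
  assumes "((\<lambda>h. N h *v x) has_vector_derivative 2 *\<^sub>R S x) (at 0)" and "N 0 = mat 1"
    and "0 < x \<bullet> S x"
  shows "\<forall>\<^sub>F h in at_right 0. norm x < norm (N h *v x)"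
  using norm_increases_right[OF assms(1)] assms(2,3) by simp

section \<open>Perturbing a well-rounded lattice\<close>

definition basis_minimal :: "real^'n^'n \<Rightarrow> bool" where
  "basis_minimal A \<longleftrightarrow> (\<exists>v :: 'n \<Rightarrow> real^'n. (\<forall>i. v i \<in> Zn) \<and> inj v \<and> independent (range v) \<and>
      S1 A = range v \<union> uminus ` range v)"

lemma span_invertible_image:
  fixes A :: "real^'n^'n"
  assumes "invertible A"
  shows "span ((*v) A ` X) = UNIV \<longleftrightarrow> span X = UNIV"
proof -
  obtain B where AB: "A ** B = mat 1" using assms invertible_def by blast
  have "surj ((*v) A)"
    using AB by (metis matrix_vector_mul_assoc matrix_vector_mul_lid surjI)
  moreover have "inj ((*v) A)" using assms by (rule invertible_inj_mult)
  ultimately have "(*v) A ` Y = UNIV \<longleftrightarrow> Y = UNIV" for Y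
    by (metis UNIV_I inj_image_mem_iff subsetI subset_antisym)
  then show ?thesis by (simp add: linear_span_image[OF matrix_vector_mul_linear])
qed

lemma card_spanning_independent:
  fixes B :: "(real^'n) set"
  assumes "independent B" "span B = UNIV"
  shows "finite B" "card B = CARD('n)"
  using assms basis_card_eq_dim[of B UNIV] finiteI_independent by auto

lemma basis_preimage:
  fixes A :: "real^'n^'n" and w vv :: "'n \<Rightarrow> real^'n"
  assumes A: "invertible A" and w: "inj w" "span (range w) = UNIV"
    and wv: "\<And>j. w j = A *v vv j"
  shows "inj vv" "independent (range vv)" "span (range vv) = UNIV"
proof -
  show "inj vv" using w(1) wv by (metis injD injI)
  have "range w = (*v) A ` range vv" using wv by auto
  then show span: "span (range vv) = UNIV" using w(2) span_invertible_image[OF A] by simp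
  have "card (range vv) = CARD('n)" using \<open>inj vv\<close> by (simp add: card_image)
  then show "independent (range vv)"
    using card_eq_dim[of "range vv" UNIV] span by simp
qed

(* Entrywise l1-distance of a matrix from the identity; it bounds how much the matrix
   can shorten a vector. *)
definition identity_defect :: "real^'n^'n \<Rightarrow> real" where
  "identity_defect N = (\<Sum>i\<in>UNIV. \<Sum>j\<in>UNIV. \<bar>(N - mat 1) $ i $ j\<bar>)"

lemma norm_lower_bound_perturbed:
  fixes N :: "real^'n^'n"
  assumes small: "identity_defect N * (m + g) < g"
    and "0 \<le> m" "0 < g" and y: "m + g \<le> norm y"
  shows "m < norm (N *v y)"
proof -
  define \<beta> where "\<beta> = identity_defect N"
  have small: "\<beta> * (m + g) < g" using small by (simp add: \<beta>_def)
  have "norm ((N - mat 1) *v y) \<le> \<beta> * norm y" unfolding \<beta>_def identity_defect_def by (rule matvec_bound)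
  moreover have "norm y \<le> norm (N *v y) + norm ((N - mat 1) *v y)"
    using norm_triangle_ineq4[of "N *v y" "(N - mat 1) *v y"]
    by (simp add: matrix_vector_mult_diff_rdistrib)
  ultimately have lower: "norm y - \<beta> * norm y \<le> norm (N *v y)" by linarith
  have "\<beta> < 1"
  proof (rule ccontr)
    assume "\<not> \<beta> < 1"
    then have "m + g \<le> \<beta> * (m + g)" using \<open>0 \<le> m\<close> \<open>0 < g\<close> by (simp add: mult_le_cancel_right1)
    then show False using small \<open>0 \<le> m\<close> by linarith
  qed
  then have "(1 - \<beta>) * (m + g) \<le> (1 - \<beta>) * norm y" using y by (intro mult_left_mono) auto
  then have "m + g - \<beta> * (m + g) \<le> norm y - \<beta> * norm y" by (simp add: left_diff_distrib)
  then show ?thesis using lower small by linarith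
qed

lemma scaled_product_apply:
  fixes N :: "real^'n^'m" and A :: "real^'k^'n"
  shows "(c *\<^sub>R (N ** A)) *v v = c *\<^sub>R (N *v (A *v v))"
  by (simp only: scaleR_matrix_vector_assoc[symmetric] matrix_vector_mul_assoc)

(* After the perturbation every nonzero lattice vector outside \<plusminus>vv is longer than the
   systole: the minimal ones by assumption, all others because of the gap. *)
lemma perturbed_nonminimal_longer:
  fixes A N :: "real^'n^'n" and vv :: "'n \<Rightarrow> real^'n"
  assumes m: "0 < syst1 A"
    and gap: "0 < g" "\<And>v. v \<in> Zn \<Longrightarrow> v \<noteq> 0 \<Longrightarrow> v \<notin> S1 A \<Longrightarrow> syst1 A + g \<le> norm (A *v v)"
    and small: "identity_defect N * (syst1 A + g) < g"
    and grow: "\<And>v. v \<in> S1 A \<Longrightarrow> v \<notin> range vv \<Longrightarrow> - v \<notin> range vv \<Longrightarrow> syst1 A < norm (N *v (A *v v))"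
    and v: "v \<in> Zn" "v \<noteq> 0" "v \<notin> range vv \<union> uminus ` range vv"
  shows "syst1 A < norm (N *v (A *v v))"
proof (cases "v \<in> S1 A")
  case True
  have "- v \<notin> range vv"
  proof
    assume "- v \<in> range vv"
    then have "v \<in> uminus ` range vv" by (metis image_eqI minus_minus)
    with v(3) show False by blast
  qed
  moreover have "v \<notin> range vv" using v(3) by blast
  ultimately show ?thesis using grow[OF True] by blast
next
  case False
  show ?thesis
  proof (rule norm_lower_bound_perturbed)
    show "0 \<le> syst1 A" using m by simp
    show "syst1 A + g \<le> norm (A *v v)" using gap(2) v(1,2) False by blast
  qed (fact small gap(1))+
qed

lemma perturbed_minimal_vectors:
  fixes A N :: "real^'n^'n" and vv :: "'n \<Rightarrow> real^'n"
  assumes m: "0 < syst1 A"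
    and gap: "0 < g" "\<And>v. v \<in> Zn \<Longrightarrow> v \<noteq> 0 \<Longrightarrow> v \<notin> S1 A \<Longrightarrow> syst1 A + g \<le> norm (A *v v)"
    and small: "identity_defect N * (syst1 A + g) < g"
    and vv: "\<And>j. vv j \<in> S1 A" and keep: "\<And>j. norm (N *v (A *v vv j)) = syst1 A"
    and grow: "\<And>v. v \<in> S1 A \<Longrightarrow> v \<notin> range vv \<Longrightarrow> - v \<notin> range vv \<Longrightarrow> syst1 A < norm (N *v (A *v v))"
    and c: "0 < c"
  shows "S1 (c *\<^sub>R (N ** A)) = range vv \<union> uminus ` range vv"
proof (rule syst1_S1_eqI(2)[where \<mu> = "c * syst1 A"])
  let ?R = "range vv \<union> uminus ` range vv"
  have S1_Zn: "S1 A \<subseteq> Zn" and S1_0: "0 \<notin> S1 A" using m by (auto simp: S1_def)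
  have "vv j \<in> Zn" for j using vv S1_Zn by blast
  then show "?R \<subseteq> Zn" using Zn_uminus by blast
  show "0 \<notin> ?R"
  proof
    assume "0 \<in> ?R"
    then obtain j where "vv j = 0" by auto
    then show False using vv[of j] S1_0 by simp
  qed
  show "?R \<noteq> {}" by simp
  show "0 < c * syst1 A" using c m by simp
  show "norm ((c *\<^sub>R (N ** A)) *v v) = c * syst1 A" if "v \<in> ?R" for v
  proof -
    from that consider j where "v = vv j" | j where "v = - vv j" by blast
    then show ?thesis
      using c keep by cases (simp_all add: scaled_product_apply linear_neg[OF matrix_vector_mul_linear])
  qed
  show "c * syst1 A < norm ((c *\<^sub>R (N ** A)) *v v)"
    if "v \<in> Zn" "v \<noteq> 0" "v \<notin> ?R" for v
    using perturbed_nonminimal_longer[OF m gap small grow that] c by (simp add: scaled_product_apply)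
qed

lemma perturbation_is_good:
  fixes A N :: "real^'n^'n" and vv :: "'n \<Rightarrow> real^'n"
  assumes A: "A \<in> SLn" and m: "0 < syst1 A"
    and gap: "0 < g" "\<And>v. v \<in> Zn \<Longrightarrow> v \<noteq> 0 \<Longrightarrow> v \<notin> S1 A \<Longrightarrow> syst1 A + g \<le> norm (A *v v)"
    and small: "identity_defect N * (syst1 A + g) < g"
    and vv: "\<And>j. vv j \<in> S1 A" "inj vv" "independent (range vv)" "span (range vv) = UNIV"
    and keep: "\<And>j. norm (N *v (A *v vv j)) = syst1 A"
    and grow: "\<And>v. v \<in> S1 A \<Longrightarrow> v \<notin> range vv \<Longrightarrow> - v \<notin> range vv \<Longrightarrow> syst1 A < norm (N *v (A *v v))"
    and detN: "0 < det N"
  defines "A' \<equiv> root CARD('n) (1 / det N) *\<^sub>R (N ** A)"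
  shows "A' \<in> SLn" and "well_rounded A'" and "basis_minimal A'"
proof -
  define c where "c = root CARD('n) (1 / det N)"
  have c: "0 < c" using detN by (simp add: c_def real_root_gt_zero)
  have S1': "S1 A' = range vv \<union> uminus ` range vv"
    unfolding A'_def c_def[symmetric]
    by (rule perturbed_minimal_vectors[OF m gap small vv(1) keep grow c])
  have "det A' = c ^ CARD('n) * (det N * det A)"
    unfolding A'_def c_def[symmetric] by (simp add: det_scaleR_mat det_mul)
  also have "c ^ CARD('n) = 1 / det N" using detN by (simp add: c_def real_root_pow_pos)
  finally show "A' \<in> SLn" using A detN by (simp add: SLn_def)
  have "span (range vv) \<subseteq> span (range vv \<union> uminus ` range vv)" by (intro span_mono) blast
  then show "well_rounded A'" unfolding well_rounded_def S1' using vv(4) by (metis top.extremum_unique)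
  have "vv j \<in> Zn" for j using vv(1) by (simp add: S1_def)
  then show "basis_minimal A'"
    unfolding basis_minimal_def S1' using vv(2,3) by (intro exI[of _ vv] conjI allI refl)
qed

lemma minimal_vector_basis:
  fixes A :: "real^'n^'n"
  assumes inv: "invertible A" and wr: "well_rounded A"
  shows "\<exists>(vv :: 'n \<Rightarrow> real^'n) w (S :: real^'n \<Rightarrow> real^'n).
    (\<forall>j. vv j \<in> S1 A \<and> w j = A *v vv j) \<and> inj w \<and> independent (range w) \<and> span (range w) = UNIV \<and>
    linear S \<and> (\<forall>j. w j \<bullet> S (w j) = 0) \<and>
    (\<forall>v \<in> S1 A. v \<notin> range vv \<longrightarrow> - v \<notin> range vv \<longrightarrow> 0 < (A *v v) \<bullet> S (A *v v))"
proof -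
  define F where "F = (*v) A ` S1 A"
  have F: "reduced_symmetric F"
    using well_rounded_minimal_vectors[OF inv wr] by (simp add: F_def)
  obtain B S where BF: "B \<subseteq> F" and indB: "independent B" and spB: "span B = span F"
    and S: "adapted_form F B S"
    using adapted_basis_exists[OF F] by blast
  have spanB: "span B = UNIV"
    using spB wr span_invertible_image[OF inv] by (simp add: F_def well_rounded_def)
  obtain w where "bij_betw w (UNIV :: 'n set) B"
    using card_spanning_independent[OF indB spanB] finite_same_card_bij[of "UNIV :: 'n set" B] by auto
  then have injw: "inj w" and rangew: "range w = B" by (auto simp: bij_betw_def)
  have "\<forall>j. \<exists>v. v \<in> S1 A \<and> w j = A *v v" using rangew BF unfolding F_def by blast
  then obtain vv where vv: "\<And>j. vv j \<in> S1 A" "\<And>j. w j = A *v vv j" by metis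
  have injA: "inj ((*v) A)" using inv by (rule invertible_inj_mult)
  have "0 < (A *v v) \<bullet> S (A *v v)" if v: "v \<in> S1 A" "v \<notin> range vv" "- v \<notin> range vv" for v
  proof -
    have "A *v v \<notin> B"
      using v(2) rangew vv(2) injA by (metis (no_types, lifting) imageE injD rangeI)
    moreover have "- (A *v v) \<notin> B"
      using v(3) rangew vv(2) injA linear_neg[OF matrix_vector_mul_linear, of A v]
      by (metis (no_types, lifting) imageE injD rangeI)
    ultimately show ?thesis using S v(1) unfolding adapted_form_def F_def by blast
  qed
  moreover have "w j \<bullet> S (w j) = 0" for j using S rangew unfolding adapted_form_def by blast
  moreover have "linear S" using S by (simp add: adapted_form_def)
  moreover have "independent (range w)" "span (range w) = UNIV" using indB spanB rangew by simp_all
  ultimately show ?thesis using vv injw by blast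
qed

lemma minimal_basis_deformation:
  fixes A :: "real^'n^'n"
  assumes inv: "invertible A" and wr: "well_rounded A"
  shows "\<exists>(vv :: 'n \<Rightarrow> real^'n) (N :: real \<Rightarrow> real^'n^'n).
    (\<forall>j. vv j \<in> S1 A) \<and> inj vv \<and> independent (range vv) \<and> span (range vv) = UNIV \<and>
    (\<forall>h j. norm (N h *v (A *v vv j)) = syst1 A) \<and>
    (\<forall>v\<in>S1 A. v \<notin> range vv \<longrightarrow> - v \<notin> range vv \<longrightarrow>
        (\<forall>\<^sub>F h in at_right 0. syst1 A < norm (N h *v (A *v v)))) \<and>
    (N \<longlongrightarrow> mat 1) (at 0)"
proof -
  obtain vv w :: "'n \<Rightarrow> real^'n" and S where vvw: "\<forall>j. vv j \<in> S1 A \<and> w j = A *v vv j"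
    and w: "inj w" "independent (range w)" "span (range w) = UNIV"
    and S: "linear S" "\<forall>j. w j \<bullet> S (w j) = 0"
    and pos: "\<forall>v \<in> S1 A. v \<notin> range vv \<longrightarrow> - v \<notin> range vv \<longrightarrow> 0 < (A *v v) \<bullet> S (A *v v)"
    using minimal_vector_basis[OF inv wr] by blast
  have vv: "\<And>j. vv j \<in> S1 A" "\<And>j. w j = A *v vv j" using vvw by simp_all
  obtain N where Nw: "\<And>h l. N h *v w l = sphere_arc (w l) (S (w l)) h"
    and Nder: "\<And>x. ((\<lambda>h. N h *v x) has_vector_derivative 2 *\<^sub>R S x) (at 0)"
    and N0: "N 0 = mat 1" and Nlim: "(N \<longlongrightarrow> mat 1) (at 0)"
    using rotation_family[OF invertible_columns_matrix[OF w(1,2)] S(1)] by metis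
  have m: "0 < syst1 A" using well_rounded_minimal_vectors[OF inv wr] by simp
  have norm_w: "norm (w j) = syst1 A" for j using vv by (simp add: S1_def)
  have wnz: "w j \<noteq> 0" for j using norm_w[of j] m by auto
  have "norm (N h *v (A *v vv j)) = syst1 A" for h j
    using norm_sphere_arc[OF S(2)[rule_format] wnz] norm_w by (simp add: Nw vv(2)[symmetric])
  moreover have "\<forall>\<^sub>F h in at_right 0. syst1 A < norm (N h *v (A *v v))"
    if "v \<in> S1 A" "v \<notin> range vv" "- v \<notin> range vv" for v
    using deformation_lengthens[where N = N and S = S and x = "A *v v", OF Nder N0] pos that by (simp add: S1_def)
  ultimately show ?thesis
    using vv(1) basis_preimage[OF inv w(1,3) vv(2)] Nlim by blast
qed

lemma near_identity_eventually:
  fixes N :: "'a \<Rightarrow> real^'n^'n" and A :: "real^'n^'n"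
  assumes N: "(N \<longlongrightarrow> mat 1) F" and "0 < \<delta>" "0 < e"
  shows "\<forall>\<^sub>F h in F. identity_defect (N h) < \<delta> \<and> 0 < det (N h) \<and>
      dist (root CARD('n) (1 / det (N h)) *\<^sub>R (N h ** A)) A < e"
proof -
  have "((\<lambda>h. identity_defect (N h)) \<longlongrightarrow> identity_defect (mat 1 :: real^'n^'n)) F"
    unfolding identity_defect_def by (intro tendsto_intros tendsto_vec_nth N)
  then have "\<forall>\<^sub>F h in F. identity_defect (N h) < \<delta>"
    using \<open>0 < \<delta>\<close> by (simp add: identity_defect_def order_tendstoD(2))
  moreover have det: "((\<lambda>h. det (N h)) \<longlongrightarrow> 1) F" using tendsto_det[OF N] by simp
  then have "\<forall>\<^sub>F h in F. 0 < det (N h)" by (simp add: order_tendstoD(1))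
  moreover have "((\<lambda>h. root CARD('n) (1 / det (N h)) *\<^sub>R (N h ** A)) \<longlongrightarrow>
      root CARD('n) (1 / 1) *\<^sub>R (mat 1 ** A)) F"
    by (intro tendsto_scaleR tendsto_real_root tendsto_divide tendsto_const det tendsto_matmul_right N) simp
  then have "\<forall>\<^sub>F h in F. dist (root CARD('n) (1 / det (N h)) *\<^sub>R (N h ** A)) A < e"
    using \<open>0 < e\<close> by (simp add: tendstoD)
  ultimately show ?thesis by eventually_elim blast
qed

lemma eventually_ball_finite_imp:
  assumes "finite X" and "\<And>x. x \<in> X \<Longrightarrow> P x \<Longrightarrow> eventually (Q x) F"
  shows "eventually (\<lambda>h. \<forall>x\<in>X. P x \<longrightarrow> Q x h) F"
proof (rule eventually_ball_finite[OF assms(1)], rule ballI)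
  fix x assume "x \<in> X"
  then show "eventually (\<lambda>h. P x \<longrightarrow> Q x h) F"
    using assms(2) by (cases "P x") (auto elim: eventually_mono)
qed

lemma approximation_by_basis_minimal:
  fixes A :: "real^'n^'n"
  assumes A: "A \<in> SLn" and wr: "well_rounded A" and "0 < e"
  shows "\<exists>A'. A' \<in> SLn \<and> well_rounded A' \<and> basis_minimal A' \<and> dist A' A < e"
proof -
  have inv: "invertible A" using A by (simp add: SLn_def invertible_det_nz)
  have m: "0 < syst1 A" and finS1: "finite (S1 A)"
    using well_rounded_minimal_vectors[OF inv wr] by simp_all
  obtain g where gap: "0 < g" "\<forall>v\<in>Zn. v \<noteq> 0 \<longrightarrow> v \<notin> S1 A \<longrightarrow> syst1 A + g \<le> norm (A *v v)"
    using systole_gap[OF inv] by blast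
  obtain vv :: "'n \<Rightarrow> real^'n" and N :: "real \<Rightarrow> real^'n^'n"
    where vv: "\<forall>j. vv j \<in> S1 A" "inj vv" "independent (range vv)" "span (range vv) = UNIV"
    and keep: "\<forall>h j. norm (N h *v (A *v vv j)) = syst1 A"
    and grow: "\<forall>v\<in>S1 A. v \<notin> range vv \<longrightarrow> - v \<notin> range vv \<longrightarrow>
        (\<forall>\<^sub>F h in at_right 0. syst1 A < norm (N h *v (A *v v)))"
    and Nlim: "(N \<longlongrightarrow> mat 1) (at 0)"
    using minimal_basis_deformation[OF inv wr] by blast
  have "\<forall>\<^sub>F h in at_right 0. identity_defect (N h) < g / (syst1 A + g) \<and>
      0 < det (N h) \<and> dist (root CARD('n) (1 / det (N h)) *\<^sub>R (N h ** A)) A < e"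
    using m gap(1) \<open>0 < e\<close>
    by (intro near_identity_eventually tendsto_mono[OF at_le[OF subset_UNIV] Nlim]) simp_all
  moreover have "\<forall>\<^sub>F h in at_right 0. \<forall>v\<in>S1 A. v \<notin> range vv \<and> - v \<notin> range vv \<longrightarrow>
      syst1 A < norm (N h *v (A *v v))"
    using grow by (intro eventually_ball_finite_imp[OF finS1]) blast
  ultimately obtain h where small: "identity_defect (N h) < g / (syst1 A + g)"
    and det: "0 < det (N h)" and close: "dist (root CARD('n) (1 / det (N h)) *\<^sub>R (N h ** A)) A < e"
    and longer: "\<forall>v\<in>S1 A. v \<notin> range vv \<and> - v \<notin> range vv \<longrightarrow> syst1 A < norm (N h *v (A *v v))"
    using eventually_happens'[OF trivial_limit_at_right_real eventually_conj] by blast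
  have "identity_defect (N h) * (syst1 A + g) < g"
    using small m gap(1) by (simp add: pos_less_divide_eq)
  moreover have "\<And>v. v \<in> S1 A \<Longrightarrow> v \<notin> range vv \<Longrightarrow> - v \<notin> range vv \<Longrightarrow>
      syst1 A < norm (N h *v (A *v v))" using longer by blast
  ultimately show ?thesis
    using perturbation_is_good[OF A m gap(1) gap(2)[rule_format] _ vv(1)[rule_format] vv(2-4)
      keep[rule_format] _ det] close by blast
qed

section \<open>The quotient topology and the main theorem\<close>

lemma istopology_Sn:
  "istopology (\<lambda>U. U \<subseteq> (Sn :: (real^'n^'n) set set) \<and>
      openin (top_of_set SLn) {A \<in> SLn. orbitSO A \<in> U})"
  unfolding istopology_def
proof (rule conjI; intro allI impI)
  fix S T :: "(real^'n^'n) set set"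
  assume S: "S \<subseteq> Sn \<and> openin (top_of_set SLn) {A \<in> SLn. orbitSO A \<in> S}"
    and T: "T \<subseteq> Sn \<and> openin (top_of_set SLn) {A \<in> SLn. orbitSO A \<in> T}"
  have "{A \<in> SLn. orbitSO A \<in> S \<inter> T} = {A \<in> SLn. orbitSO A \<in> S} \<inter> {A \<in> SLn. orbitSO A \<in> T}"
    by auto
  with S T show "S \<inter> T \<subseteq> Sn \<and> openin (top_of_set SLn) {A \<in> SLn. orbitSO A \<in> S \<inter> T}"
    by (auto intro: openin_Int)
next
  fix K :: "(real^'n^'n) set set set"
  assume K: "\<forall>S\<in>K. S \<subseteq> Sn \<and> openin (top_of_set SLn) {A \<in> SLn. orbitSO A \<in> S}"
  have "{A \<in> SLn. orbitSO A \<in> \<Union>K} = (\<Union>S\<in>K. {A \<in> SLn. orbitSO A \<in> S})" by auto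
  moreover have "openin (top_of_set SLn) (\<Union>S\<in>K. {A \<in> SLn. orbitSO A \<in> S})"
    using K by (intro openin_Union) auto
  ultimately show "\<Union>K \<subseteq> Sn \<and> openin (top_of_set SLn) {A \<in> SLn. orbitSO A \<in> \<Union>K}"
    using K by auto
qed

lemma openin_Sn_top:
  "openin (Sn_top :: (real^'n^'n) set topology) U \<longleftrightarrow>
     U \<subseteq> Sn \<and> openin (top_of_set SLn) {A \<in> SLn. orbitSO A \<in> U}"
  unfolding Sn_top_def by (subst topology_inverse'[OF istopology_Sn]) (rule refl)

lemma topspace_Sn_top: "topspace (Sn_top :: (real^'n^'n) set topology) = Sn"
proof -
  have "{A \<in> SLn. orbitSO A \<in> (Sn :: (real^'n^'n) set set)} = SLn" by (auto simp: Sn_def)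
  then have "openin (Sn_top :: (real^'n^'n) set topology) Sn" by (simp add: openin_Sn_top)
  then show ?thesis
    by (metis openin_Sn_top openin_subset subset_antisym openin_topspace)
qed

lemma orbit_in_closure_of:
  fixes A :: "real^'n^'n"
  assumes A: "A \<in> SLn" "orbitSO A \<in> X"
    and approx: "\<And>e. 0 < e \<Longrightarrow> \<exists>A'\<in>SLn. dist A' A < e \<and> orbitSO A' \<in> D \<inter> X"
  shows "orbitSO A \<in> subtopology Sn_top X closure_of D"
  unfolding in_closure_of
proof (intro conjI allI impI)
  show "orbitSO A \<in> topspace (subtopology Sn_top X)"
    using A by (auto simp: topspace_Sn_top Sn_def)
next
  fix T assume T: "orbitSO A \<in> T \<and> openin (subtopology Sn_top X) T"
  then obtain U where U: "openin Sn_top U" "T = U \<inter> X" by (auto simp: openin_subtopology)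
  then have "openin (top_of_set SLn) {B \<in> SLn. orbitSO B \<in> U}" by (simp add: openin_Sn_top)
  moreover have "A \<in> {B \<in> SLn. orbitSO B \<in> U}" using A T U by auto
  ultimately obtain e where "0 < e" and e: "\<And>B. B \<in> SLn \<Longrightarrow> dist B A < e \<Longrightarrow> orbitSO B \<in> U"
    unfolding openin_euclidean_subtopology_iff by blast
  then obtain A' where "A' \<in> SLn" "dist A' A < e" "orbitSO A' \<in> D \<inter> X" using approx by blast
  then show "\<exists>y. y \<in> D \<and> y \<in> T" using e U(2) by blast
qed

theorem mainTheorem5:
  "subtopology Sn_top WR closure_of
     {orbitSO A | A :: real^'n^'n. A \<in> SLn \<and> well_rounded A \<and>
        (\<exists>v :: 'n \<Rightarrow> real^'n. (\<forall>i. v i \<in> Zn) \<and> inj v \<and> independent (range v) \<and>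
            S1 A = range v \<union> uminus ` range v)}
   = WR"
  (is "?X closure_of ?D = WR")
proof
  show "?X closure_of ?D \<subseteq> WR"
    using closure_of_subset_topspace by fastforce
  show "WR \<subseteq> ?X closure_of ?D"
  proof
    fix p :: "(real^'n^'n) set" assume "p \<in> WR"
    then obtain A where p: "p = orbitSO A" and A: "A \<in> SLn" "well_rounded A"
      unfolding WR_def by blast
    show "p \<in> ?X closure_of ?D"
      unfolding p
    proof (rule orbit_in_closure_of)
      show "A \<in> SLn" "orbitSO A \<in> WR" using A unfolding WR_def by blast+
      fix e :: real assume "0 < e"
      then obtain A' where "A' \<in> SLn" "well_rounded A'" "basis_minimal A'" "dist A' A < e"
        using approximation_by_basis_minimal[OF A] by blast
      then show "\<exists>A'\<in>SLn. dist A' A < e \<and> orbitSO A' \<in> ?D \<inter> WR"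
        unfolding WR_def basis_minimal_def by blast
    qed
  qed
qed

end
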